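(* Let $b_x,b_y,u_x,u_y,K,\beta,e$ be positive constants with $u_y>u_x$ and $b_x\geq b_y+e$, let $h>0$, and set \[ \phi_1(h)=\frac{b_y\left\{1-\exp\left(-\frac{\beta K u_y}{b_y}h\right)\right\}}{\beta K u_y},\qquad \phi_2(h)=h . \] Consider the discrete system \[ X_{n+1}=\frac{X_n(1+\phi_1(h)b_x)+\phi_1(h)eY_n}{1+\phi_1(h)\left(\frac{b_x}{K}X_n+\frac{b_x}{K}Y_n+u_x+\beta Y_n+\frac{e}{K}Y_n+\frac{e}{K}\frac{Y_n^2}{X_n}\right)},\qquad Y_{n+1}=\frac{Y_n\{1+\phi_2(h)(b_y+\beta X_n)\}}{1+\phi_2(h)\left(\frac{b_y}{K}X_n+\frac{b_y}{K}Y_n+u_y\right)} . \] Let $E_0=(0,0)$, $E_1=(\bar X,0)$ with $\bar X=K(1-u_x/b_x)$, and $E^*=(X^*,Y^* )$ with \[ X^*=\frac{-B+\sqrt{B^2-4AC}}{2A},\qquad Y^*=\frac{(\beta K-b_y)X^*}{b_y}+\frac{K(b_y-u_y)}{b_y}, \] where \[ A=\frac{\beta K}{b_y^2}\{b_y(b_x-b_y-e)+\beta K(b_y+e)\}, \] \[ B=-K(b_x-u_x)+K(b_x+\beta K+e)\frac{b_y-u_y}{b_y}+2eK\frac{(\beta K-b_y)(b_y-u_y)}{b_y^2}-\frac{eK(\beta K-b_y)}{b_y}, \] \[ C=-\frac{eK^2(b_y-u_y)u_y}{b_y^2}. \] Define $V_0=\frac{b_y}{b_x}\frac{u_x}{u_y}$,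 $H_0=\frac{\beta}{u_y}K\left(1-\frac{u_x}{b_x}\right)$ and $R_0=V_0+H_0$. Then, for every $h>0$: (i) the system is locally asymptotically stable around $E_0$ if $b_x<u_x$ and $b_y<u_y$; (ii) if $b_x>u_x$, the system is locally asymptotically stable around $E_1$ when $R_0<1$, and $E_1$ is unstable when $R_0>1$; (iii) the system is locally asymptotically stable around $E^*$ if $b_x>u_x$, $b_y>u_y$, $b_y>\beta K$ and $\frac{K}{X^*}>\frac{b_y-\beta K}{b_y-u_y}$.
   Context: This is a nonstandard finite-difference discretization (with step size $h$) of a host–parasite model with horizontal and imperfect vertical transmission. The paper assumes throughout that $u_y>u_x$ and $b_x\geq b_y+e$. A fixed point of the map is called (locally asymptotically) stable if both eigenvalues of the Jacobian of the map at the fixed point have modulus strictly less than $1$. *)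

theory Defs
  imports "HOL-Analysis.Analysis"
begin

definition phi1 :: "real \<Rightarrow> real \<Rightarrow> real \<Rightarrow> real \<Rightarrow> real \<Rightarrow> real" where
  "phi1 by' uy \<beta> K h = by' * (1 - exp (-(\<beta> * K * uy / by') * h)) / (\<beta> * K * uy)"

definition phi2 :: "real \<Rightarrow> real" where
  "phi2 h = h"

definition Fmap :: "real \<Rightarrow> real \<Rightarrow> real \<Rightarrow> real \<Rightarrow> real \<Rightarrow> real \<Rightarrow> real \<Rightarrow> real \<Rightarrow> real \<Rightarrow> real \<Rightarrow> real" where
  "Fmap bx by' ux uy K \<beta> e h X Y =
     (let p = phi1 by' uy \<beta> K h in
      (X * (1 + p * bx) + p * e * Y) /
      (1 + p * (bx / K * X + bx / K * Y + ux + \<beta> * Y + e / K * Y + e / K * (Y^2 / X))))"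

definition Gmap :: "real \<Rightarrow> real \<Rightarrow> real \<Rightarrow> real \<Rightarrow> real \<Rightarrow> real \<Rightarrow> real \<Rightarrow> real \<Rightarrow> real \<Rightarrow> real \<Rightarrow> real" where
  "Gmap bx by' ux uy K \<beta> e h X Y =
     (let q = phi2 h in
      Y * (1 + q * (by' + \<beta> * X)) / (1 + q * (by' / K * X + by' / K * Y + uy)))"

definition is_jacobian :: "(real \<Rightarrow> real \<Rightarrow> real) \<Rightarrow> (real \<Rightarrow> real \<Rightarrow> real) \<Rightarrow> real \<Rightarrow> real \<Rightarrow>
    real \<Rightarrow> real \<Rightarrow> real \<Rightarrow> real \<Rightarrow> bool" where
  "is_jacobian f g X Y a b c d \<longleftrightarrow>
     ((\<lambda>x. f x Y) has_real_derivative a) (at X) \<and>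
     ((\<lambda>y. f X y) has_real_derivative b) (at Y) \<and>
     ((\<lambda>x. g x Y) has_real_derivative c) (at X) \<and>
     ((\<lambda>y. g X y) has_real_derivative d) (at Y)"

definition eigen2 :: "real \<Rightarrow> real \<Rightarrow> real \<Rightarrow> real \<Rightarrow> complex \<Rightarrow> bool" where
  "eigen2 a b c d z \<longleftrightarrow> (z - of_real a) * (z - of_real d) - of_real b * of_real c = 0"

definition fixed_point2 :: "(real \<Rightarrow> real \<Rightarrow> real) \<Rightarrow> (real \<Rightarrow> real \<Rightarrow> real) \<Rightarrow> real \<Rightarrow> real \<Rightarrow> bool" where
  "fixed_point2 f g X Y \<longleftrightarrow> f X Y = X \<and> g X Y = Y"

definition las2 :: "(real \<Rightarrow> real \<Rightarrow> real) \<Rightarrow> (real \<Rightarrow> real \<Rightarrow> real) \<Rightarrow> real \<Rightarrow> real \<Rightarrow> bool" where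
  "las2 f g X Y \<longleftrightarrow> fixed_point2 f g X Y \<and>
     (\<exists>a b c d. is_jacobian f g X Y a b c d \<and> (\<forall>z. eigen2 a b c d z \<longrightarrow> cmod z < 1))"

definition unstable2 :: "(real \<Rightarrow> real \<Rightarrow> real) \<Rightarrow> (real \<Rightarrow> real \<Rightarrow> real) \<Rightarrow> real \<Rightarrow> real \<Rightarrow> bool" where
  "unstable2 f g X Y \<longleftrightarrow> fixed_point2 f g X Y \<and>
     (\<exists>a b c d. is_jacobian f g X Y a b c d \<and> (\<exists>z. eigen2 a b c d z \<and> cmod z > 1))"


definition qA :: "real \<Rightarrow> real \<Rightarrow> real \<Rightarrow> real \<Rightarrow> real \<Rightarrow> real \<Rightarrow> real \<Rightarrow> real" where
  "qA bx by' ux uy K \<beta> e = \<beta> * K / by'^2 * (by' * (bx - by' - e) + \<beta> * K * (by' + e))"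

definition qB :: "real \<Rightarrow> real \<Rightarrow> real \<Rightarrow> real \<Rightarrow> real \<Rightarrow> real \<Rightarrow> real \<Rightarrow> real" where
  "qB bx by' ux uy K \<beta> e = - K * (bx - ux) + K * (bx + \<beta> * K + e) * ((by' - uy) / by')
      + 2 * e * K * ((\<beta> * K - by') * (by' - uy)) / by'^2 - e * K * (\<beta> * K - by') / by'"

definition qC :: "real \<Rightarrow> real \<Rightarrow> real \<Rightarrow> real \<Rightarrow> real \<Rightarrow> real \<Rightarrow> real \<Rightarrow> real" where
  "qC bx by' ux uy K \<beta> e = - (e * K^2 * (by' - uy) * uy) / by'^2"

definition Xstar :: "real \<Rightarrow> real \<Rightarrow> real \<Rightarrow> real \<Rightarrow> real \<Rightarrow> real \<Rightarrow> real \<Rightarrow> real" where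
  "Xstar bx by' ux uy K \<beta> e =
     (let A = qA bx by' ux uy K \<beta> e; B = qB bx by' ux uy K \<beta> e; C = qC bx by' ux uy K \<beta> e
      in (- B + sqrt (B^2 - 4 * A * C)) / (2 * A))"

definition Ystar :: "real \<Rightarrow> real \<Rightarrow> real \<Rightarrow> real \<Rightarrow> real \<Rightarrow> real \<Rightarrow> real \<Rightarrow> real" where
  "Ystar bx by' ux uy K \<beta> e =
     (\<beta> * K - by') * Xstar bx by' ux uy K \<beta> e / by' + K * (by' - uy) / by'"

end

theory Submission
  imports Defs "HOL-Library.Quadratic_Discriminant"
begin

(* At a fixed point the numerator of each component equals the coordinate times its denominator,
   so the quotient rule turns every Jacobian entry into a simple ratio.
   On the boundary equilibria E0 and E1 the second component vanishes identically on Y = 0, so the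
   Jacobian is triangular and its eigenvalues are ratios (1 + phi u)/(1 + phi v) of birth and death
   terms; at E1 the comparison in the second one is exactly R0 against 1.
   At E* the Jacobian has the form [[1 - s, b], [c, 1 - t]] with 0 < s, t < 1 and 0 < bc < st, which
   satisfies the Jury conditions. The signs come from the nullclines: the Y-nullcline is the line
   defining Ystar, on it the X-nullcline reduces to A X^2 + B X + C = 0, and together with
   b_x >= b_y + e and u_y > u_x they give Xstar + Ystar < K and e (K - Xstar - Ystar) < beta K Xstar. *)

lemma eigen2_lower_triangular_iff: "eigen2 a b 0 d z \<longleftrightarrow> z = of_real a \<or> z = of_real d"
  by (simp add: eigen2_def)

lemma eigen2_lower_triangular_stable:
  "\<bar>a\<bar> < 1 \<Longrightarrow> \<bar>d\<bar> < 1 \<Longrightarrow> \<forall>z. eigen2 a b 0 d z \<longrightarrow> cmod z < 1"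
  by (auto simp: eigen2_lower_triangular_iff)

lemma eigen2_lower_triangular_unstable:
  "\<bar>d\<bar> > 1 \<Longrightarrow> \<exists>z. eigen2 a b 0 d z \<and> cmod z > 1"
  by (auto simp: eigen2_lower_triangular_iff)

lemma eigen2_cmod_lt_1_if_jury:
  fixes a b c d :: real
  assumes trace: "\<bar>a + d\<bar> < 1 + (a*d - b*c)" and det: "a*d - b*c < 1"
    and z: "eigen2 a b c d z"
  shows "cmod z < 1"
proof -
  define T where "T = a + d"
  define D where "D = a*d - b*c"
  obtain u v where uv: "z = Complex u v" by (cases z)
  have "z*z - of_real T * z + of_real D = 0"
    using z unfolding eigen2_def T_def D_def by (simp add: algebra_simps)
  from arg_cong[OF this, of Re] arg_cong[OF this, of Im]
  have re: "u * u - v * v - T * u + D = 0" and im: "v * (2*u - T) = 0"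
    by (simp_all add: uv algebra_simps)
  have T: "\<bar>T\<bar> < 1 + D" and D: "D < 1" using trace det by (simp_all add: T_def D_def)
  have "u * u + v * v < 1"
  proof (cases "v = 0")
    case True
    \<comment> \<open>t^2 - T t + D is positive at t = 1 and t = -1 and \<bar>T\<bar> < 2, so its real roots lie in (-1,1)\<close>
    have "\<bar>u\<bar> < 1"
    proof (rule ccontr)
      assume "\<not> \<bar>u\<bar> < 1"
      then consider "u \<ge> 1" | "u \<le> -1" by linarith
      then show False
      proof cases
        case 1
        then have "(u - 1) * (u + 1 - T) \<ge> 0" using T D by (intro mult_nonneg_nonneg) auto
        then show False using re True T by (auto simp: algebra_simps)
      next
        case 2
        then have "(-u - 1) * (-u + 1 + T) \<ge> 0" using T D by (intro mult_nonneg_nonneg) auto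
        then show False using re True T by (auto simp: algebra_simps)
      qed
    qed
    then show ?thesis using True abs_square_less_1[of u] by (simp add: power2_eq_square)
  next
    case False
    then have "T = 2 * u" using im by simp
    then have "u * u + v * v = D" using re by (simp add: algebra_simps)
    then show ?thesis using D by simp
  qed
  then show ?thesis by (simp add: uv cmod_def power2_eq_square)
qed

lemma eigen2_cmod_lt_1_near_identity:
  fixes s t b c :: real
  assumes "0 < s" "s < 1" "0 < t" "t < 1" "0 \<le> b * c" "b * c < s * t"
    and "eigen2 (1 - s) b c (1 - t) z"
  shows "cmod z < 1"
proof (rule eigen2_cmod_lt_1_if_jury[OF _ _ assms(7)])
  have "(1 - s) * (1 - t) - b * c = 1 - s - t + s * t - b * c" by (simp add: algebra_simps)
  moreover have "s * t < s" using assms by simp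
  ultimately show "(1 - s) * (1 - t) - b * c < 1" using assms by linarith
  show "\<bar>1 - s + (1 - t)\<bar> < 1 + ((1 - s) * (1 - t) - b * c)"
    using assms by (simp add: algebra_simps)
qed

lemma quadratic_positive_root:
  fixes a b c :: real
  assumes "a > 0" "c < 0"
  defines "x \<equiv> (- b + sqrt (b^2 - 4 * a * c)) / (2 * a)"
  shows "x > 0" and "a * x^2 + b * x + c = 0"
proof -
  have disc: "b^2 < b^2 - 4 * a * c" using assms(1,2) by (simp add: mult_pos_neg)
  then have "\<bar>b\<bar> < sqrt (b^2 - 4 * a * c)"
    using real_sqrt_less_mono[OF disc] by simp
  then show "x > 0" unfolding x_def using assms(1) by (intro divide_pos_pos) linarith+
  have "discrim a b c \<ge> 0" using disc zero_le_power2[of b] unfolding discrim_def by linarith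
  with assms(1) show "a * x^2 + b * x + c = 0"
    unfolding x_def by (subst discriminant_nonneg) (auto simp: discrim_def)
qed

lemma DERIV_divide_at_value:
  assumes "(f has_real_derivative f') (at x)" "(g has_real_derivative g') (at x)"
    and "g x \<noteq> 0" "f x = v * g x"
  shows "((\<lambda>x. f x / g x) has_real_derivative (f' - v * g') / g x) (at x)"
proof (rule DERIV_cong[OF DERIV_divide[OF assms(1-3)]])
  show "(f' * g x - f x * g') / (g x * g x) = (f' - v * g') / g x"
    using assms(3,4) by (simp add: field_simps)
qed

locale nsfd_host_parasite =
  fixes bx by' ux uy K \<beta> e h :: real
  assumes pos: "bx > 0" "by' > 0" "ux > 0" "uy > 0" "K > 0" "\<beta> > 0" "e > 0" "h > 0"
begin

abbreviation "p \<equiv> phi1 by' uy \<beta> K h"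
abbreviation "F \<equiv> Fmap bx by' ux uy K \<beta> e h"
abbreviation "G \<equiv> Gmap bx by' ux uy K \<beta> e h"

definition Fden :: "real \<Rightarrow> real \<Rightarrow> real" where
  "Fden X Y = 1 + p * (bx/K*X + bx/K*Y + ux + \<beta>*Y + e/K*Y + e/K*(Y^2/X))"

definition Gden :: "real \<Rightarrow> real \<Rightarrow> real" where
  "Gden X Y = 1 + h * (by'/K*X + by'/K*Y + uy)"

lemma F_eq: "F X Y = (X * (1 + p*bx) + p*e*Y) / Fden X Y"
  by (simp add: Fmap_def Fden_def Let_def)

lemma G_eq: "G X Y = Y * (1 + h*(by' + \<beta>*X)) / Gden X Y"
  by (simp add: Gmap_def Gden_def phi2_def)

lemma p_pos: "p > 0"
proof -
  have "exp (-(\<beta> * K * uy / by') * h) < 1" using pos by simp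
  then show ?thesis unfolding phi1_def using pos by simp
qed

lemma Fden_pos: "0 \<le> X \<Longrightarrow> 0 \<le> Y \<Longrightarrow> Fden X Y > 0"
  unfolding Fden_def using pos p_pos by (intro add_pos_nonneg) simp_all

lemma Gden_pos: "0 \<le> X \<Longrightarrow> 0 \<le> Y \<Longrightarrow> Gden X Y > 0"
  unfolding Gden_def using pos by (intro add_pos_nonneg) simp_all

text \<open>With Y = 0 the term Y^2/x of Fden is identically 0 (by x / 0 = 0), so the partial
  derivative also exists at X = 0; this case is needed at the origin.\<close>
lemma Fden_deriv_X:
  assumes "X \<noteq> 0 \<or> Y = 0"
  shows "((\<lambda>x. Fden x Y) has_real_derivative p * (bx/K - e/K*(Y^2/X^2))) (at X)"
proof -
  have "((\<lambda>x. Y^2 / x) has_real_derivative - (Y^2 / X^2)) (at X)"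
  proof (cases "Y = 0")
    case False
    with assms show ?thesis by (auto intro!: derivative_eq_intros simp: power2_eq_square)
  qed simp
  then have "((\<lambda>x. 1 + p * (bx/K*x + (bx/K*Y + ux + \<beta>*Y + e/K*Y) + e/K*(Y^2/x)))
      has_real_derivative 0 + p * (bx/K*1 + 0 + e/K*(- (Y^2/X^2)))) (at X)"
    by (intro DERIV_add DERIV_cmult DERIV_const DERIV_ident)
  then show ?thesis unfolding Fden_def by (simp add: algebra_simps)
qed

lemma Fden_deriv_Y:
  "((\<lambda>y. Fden X y) has_real_derivative p * (bx/K + \<beta> + e/K + e/K*(2*Y/X))) (at Y)"
proof -
  have "((\<lambda>y. y^2 / X) has_real_derivative 2*Y/X) (at Y)"
    using DERIV_cdivide[OF DERIV_pow[of 2 Y]] by simp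
  then have "((\<lambda>y. 1 + p * ((bx/K*X + ux) + (bx/K + \<beta> + e/K)*y + e/K*(y^2/X)))
      has_real_derivative 0 + p * (0 + (bx/K + \<beta> + e/K)*1 + e/K*(2*Y/X))) (at Y)"
    by (intro DERIV_add DERIV_cmult DERIV_const DERIV_ident)
  then show ?thesis unfolding Fden_def by (simp add: algebra_simps)
qed

lemma Gden_deriv_X: "((\<lambda>x. Gden x Y) has_real_derivative h*by'/K) (at X)"
  and Gden_deriv_Y: "((\<lambda>y. Gden X y) has_real_derivative h*by'/K) (at Y)"
  unfolding Gden_def using pos by (auto intro!: derivative_eq_intros)

lemma is_jacobian_at_fixed_point:
  assumes fp: "fixed_point2 F G X Y" and "0 \<le> X" "0 \<le> Y" and XY: "X \<noteq> 0 \<or> Y = 0"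
  shows "is_jacobian F G X Y
    ((1 + p*bx - p*bx/K*X + p*e/K*(Y^2/X)) / Fden X Y)
    ((p*e - p*(bx/K + \<beta> + e/K)*X - 2*p*e/K*Y) / Fden X Y)
    (h*(\<beta> - by'/K)*Y / Gden X Y)
    ((1 + h*(by' + \<beta>*X) - h*by'/K*Y) / Gden X Y)"
proof -
  have Fd: "Fden X Y \<noteq> 0" and Gd: "Gden X Y \<noteq> 0"
    using Fden_pos[OF assms(2,3)] Gden_pos[OF assms(2,3)] by simp_all
  from fp Fd Gd have Fv: "X * (1 + p*bx) + p*e*Y = X * Fden X Y"
    and Gv: "Y * (1 + h*(by' + \<beta>*X)) = Y * Gden X Y"
    by (simp_all add: fixed_point2_def F_eq G_eq field_simps)
  have a: "(1 + p*bx) - X * (p * (bx/K - e/K*(Y^2/X^2))) = 1 + p*bx - p*bx/K*X + p*e/K*(Y^2/X)"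
   and b: "p*e - X * (p * (bx/K + \<beta> + e/K + e/K*(2*Y/X))) = p*e - p*(bx/K + \<beta> + e/K)*X - 2*p*e/K*Y"
    using XY by (auto simp: field_simps power2_eq_square)
  have c: "Y*h*\<beta> - Y * (h*by'/K) = h*(\<beta> - by'/K)*Y"
   and d: "(1 + h*(by' + \<beta>*X)) - Y * (h*by'/K) = 1 + h*(by' + \<beta>*X) - h*by'/K*Y"
    by (simp_all add: algebra_simps)
  show ?thesis
    unfolding is_jacobian_def F_eq G_eq a[symmetric] b[symmetric] c[symmetric] d[symmetric]
    by (intro conjI DERIV_divide_at_value Fden_deriv_X[OF XY] Fden_deriv_Y Gden_deriv_X Gden_deriv_Y
        Fd Gd Fv Gv)
      (auto intro!: derivative_eq_intros)
qed

lemma is_jacobian_on_X_axis: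
  assumes "fixed_point2 F G X 0" "0 \<le> X"
  shows "is_jacobian F G X 0 ((1 + p*bx - p*bx/K*X) / Fden X 0)
    ((p*e - p*(bx/K + \<beta> + e/K)*X) / Fden X 0) 0 ((1 + h*(by' + \<beta>*X)) / Gden X 0)"
  using is_jacobian_at_fixed_point[OF assms] by simp

lemma las2_origin:
  assumes "bx < ux" "by' < uy"
  shows "las2 F G 0 0"
proof -
  have fp: "fixed_point2 F G 0 0" by (simp add: fixed_point2_def F_eq G_eq)
  have J: "is_jacobian F G 0 0 ((1 + p*bx) / (1 + p*ux)) (p*e / (1 + p*ux)) 0 ((1 + h*by') / (1 + h*uy))"
    using is_jacobian_on_X_axis[OF fp] by (simp add: Fden_def Gden_def)
  have "\<bar>(1 + p*bx) / (1 + p*ux)\<bar> < 1" "\<bar>(1 + h*by') / (1 + h*uy)\<bar> < 1"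
    using assms pos p_pos by (simp_all add: abs_of_pos add_pos_pos divide_less_eq)
  then show ?thesis
    unfolding las2_def using fp J eigen2_lower_triangular_stable by blast
qed

lemma boundary_equilibrium_stability:
  assumes "ux < bx"
  defines "Xb \<equiv> K * (1 - ux / bx)"
    and "R0 \<equiv> by' / bx * (ux / uy) + \<beta> / uy * K * (1 - ux / bx)"
  shows "R0 < 1 \<Longrightarrow> las2 F G Xb 0" and "R0 > 1 \<Longrightarrow> unstable2 F G Xb 0"
proof -
  have "ux / bx < 1" using assms(1) pos by simp
  then have Xb_pos: "Xb > 0" unfolding Xb_def using pos by simp
  have carrying: "bx / K * Xb = bx - ux" unfolding Xb_def using pos by (simp add: field_simps)
  have Fden: "Fden Xb 0 = 1 + p*bx" using carrying by (simp add: Fden_def)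
  have fp: "fixed_point2 F G Xb 0"
  proof -
    have "0 < p*bx" using p_pos pos by simp
    then show ?thesis by (simp add: fixed_point2_def F_eq G_eq Fden)
  qed
  have "p*bx/K*Xb = p*(bx - ux)" unfolding carrying[symmetric] by simp
  then have a_eq: "1 + p*bx - p*bx/K*Xb = 1 + p*ux" by (simp add: algebra_simps)
  have J: "is_jacobian F G Xb 0 ((1 + p*ux) / (1 + p*bx))
      ((p*e - p*(bx/K + \<beta> + e/K)*Xb) / (1 + p*bx)) 0
      ((1 + h*(by' + \<beta>*Xb)) / (1 + h*(by'/K*Xb + uy)))"
    using is_jacobian_on_X_axis[OF fp] Xb_pos unfolding Fden a_eq by (simp add: Gden_def)
  have a: "\<bar>(1 + p*ux) / (1 + p*bx)\<bar> < 1"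
    using assms(1) pos p_pos by (simp add: abs_of_pos add_pos_pos divide_less_eq)
  have R0: "by' + \<beta>*Xb - (by'/K*Xb + uy) = uy * (R0 - 1)"
    unfolding Xb_def R0_def using pos by (simp add: field_simps)
  have den: "0 < 1 + h*(by'/K*Xb + uy)" using pos Xb_pos by (simp add: add_pos_pos)
  show "las2 F G Xb 0" if "R0 < 1"
  proof -
    have "uy * (R0 - 1) < 0" using that pos by (simp add: mult_pos_neg)
    then have "by' + \<beta>*Xb < by'/K*Xb + uy" using R0 by linarith
    then have "\<bar>(1 + h*(by' + \<beta>*Xb)) / (1 + h*(by'/K*Xb + uy))\<bar> < 1"
      using den pos Xb_pos by (simp add: abs_of_pos add_pos_pos divide_less_eq)
    then show ?thesis unfolding las2_def using fp J a eigen2_lower_triangular_stable by blast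
  qed
  show "unstable2 F G Xb 0" if "R0 > 1"
  proof -
    have "uy * (R0 - 1) > 0" using that pos by simp
    then have "by' + \<beta>*Xb > by'/K*Xb + uy" using R0 by linarith
    then have "\<bar>(1 + h*(by' + \<beta>*Xb)) / (1 + h*(by'/K*Xb + uy))\<bar> > 1"
      using den pos Xb_pos by (simp add: abs_of_pos add_pos_pos less_divide_eq)
    then show ?thesis unfolding unstable2_def using fp J eigen2_lower_triangular_unstable by blast
  qed
qed

abbreviation "A \<equiv> qA bx by' ux uy K \<beta> e"
abbreviation "B \<equiv> qB bx by' ux uy K \<beta> e"
abbreviation "C \<equiv> qC bx by' ux uy K \<beta> e"
abbreviation "Xs \<equiv> Xstar bx by' ux uy K \<beta> e"
abbreviation "Ys \<equiv> Ystar bx by' ux uy K \<beta> e"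

lemma Xstar_positive_root:
  assumes "by' + e \<le> bx" "uy < by'"
  shows "0 < Xs" and "A * Xs^2 + B * Xs + C = 0"
proof -
  have "0 \<le> by' * (bx - by' - e)" using assms(1) pos by simp
  moreover have "0 < \<beta> * K * (by' + e)" using pos by simp
  ultimately have "0 < A" unfolding qA_def using pos by (simp add: add_nonneg_pos)
  moreover have "C < 0" unfolding qC_def using assms(2) pos by simp
  ultimately show "0 < Xs" and "A * Xs^2 + B * Xs + C = 0"
    using quadratic_positive_root[of A C B] unfolding Xstar_def Let_def by simp_all
qed

lemma X_nullcline_quadratic:
  assumes "by' * (K - X - Y) = uy*K - \<beta>*K*X"
  shows "(K - X - Y) * (bx*X + e*Y) - X * (ux*K + \<beta>*K*Y) = - (A * X^2 + B * X + C)"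
proof -
  have Y: "Y = ((\<beta>*K - by')*X + K*(by' - uy)) / by'"
    using assms pos by (simp add: field_simps)
  show ?thesis
    unfolding Y qA_def qB_def qC_def using pos by (simp add: field_simps power2_eq_square)
qed

lemma interior_equilibrium:
  assumes "by' + e \<le> bx" "uy < by'" "(by' - \<beta>*K) / (by' - uy) < K / Xs"
  shows "0 < Xs" and "0 < Ys"
    and "by' * (K - Xs - Ys) = uy*K - \<beta>*K*Xs"
    and "(K - Xs - Ys) * (bx*Xs + e*Ys) = Xs * (ux*K + \<beta>*K*Ys)"
proof -
  show X_pos: "0 < Xs" using Xstar_positive_root assms(1,2) by auto
  have Y_eq: "by' * Ys = (\<beta>*K - by') * Xs + K * (by' - uy)"
    unfolding Ystar_def using pos by (simp add: field_simps)
  moreover have "(by' - \<beta>*K) * Xs < K * (by' - uy)"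
    using assms(2,3) X_pos by (simp add: field_simps)
  ultimately have "0 < by' * Ys" by (simp add: algebra_simps)
  then show "0 < Ys" using pos by (simp add: zero_less_mult_iff)
  show Y_null: "by' * (K - Xs - Ys) = uy*K - \<beta>*K*Xs" using Y_eq by (simp add: algebra_simps)
  show "(K - Xs - Ys) * (bx*Xs + e*Ys) = Xs * (ux*K + \<beta>*K*Ys)"
    using X_nullcline_quadratic[OF Y_null] Xstar_positive_root(2)[OF assms(1,2)] by simp
qed

lemma interior_nullcline_bounds:
  assumes "0 < X" "0 < Y"
    and Y_null: "by' * (K - X - Y) = uy*K - \<beta>*K*X"
    and X_null: "(K - X - Y) * (bx*X + e*Y) = X * (ux*K + \<beta>*K*Y)"
    and "ux < uy" "by' + e \<le> bx"
  shows "X + Y < K" and "e * (K - X - Y) < \<beta>*K*X"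
proof -
  define W where "W = K - X - Y"
  have "0 < X * (ux*K + \<beta>*K*Y)" using assms(1,2) pos by (simp add: add_pos_pos)
  then have "0 < W * (bx*X + e*Y)" using X_null unfolding W_def by simp
  moreover have "0 < bx*X + e*Y" using assms(1,2) pos by (simp add: add_pos_pos)
  ultimately have W: "0 < W" by (simp add: zero_less_mult_iff)
  then show "X + Y < K" unfolding W_def by simp
  \<comment> \<open>bound e by bx - by', then use the X-nullcline, the Y-nullcline and ux < uy\<close>
  have "W * X * (by' + e) \<le> W * X * bx" using W assms(1,6) by (intro mult_left_mono) simp_all
  then have "(X + Y) * (e*W) \<le> W * (bx*X + e*Y) - X * (by'*W)" by (simp add: algebra_simps)
  also have "\<dots> = X * (ux*K + \<beta>*K*Y) - X * (uy*K - \<beta>*K*X)"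
    using X_null Y_null unfolding W_def by simp
  also have "\<dots> < (X + Y) * (\<beta>*K*X)"
    using assms(1,5) pos by (simp add: algebra_simps)
  finally show "e * (K - X - Y) < \<beta>*K*X"
    unfolding W_def using assms(1,2) by (simp add: mult_less_cancel_left_pos)
qed

lemma Fden_on_X_nullcline:
  assumes "0 < X" "(K - X - Y) * (bx*X + e*Y) = X * (ux*K + \<beta>*K*Y)"
  shows "Fden X Y = 1 + p * (bx + e*Y/X)"
proof -
  have "bx/K*X + bx/K*Y + ux + \<beta>*Y + e/K*Y + e/K*(Y^2/X) - (bx + e*Y/X)
      = (X * (ux*K + \<beta>*K*Y) - (K - X - Y) * (bx*X + e*Y)) / (K*X)"
    using assms(1) pos by (simp add: field_simps power2_eq_square)
  then show ?thesis unfolding Fden_def using assms(2) by simp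
qed

lemma Gden_on_Y_nullcline:
  assumes "by' * (K - X - Y) = uy*K - \<beta>*K*X"
  shows "Gden X Y = 1 + h * (by' + \<beta>*X)"
proof -
  have "by'/K*X + by'/K*Y + uy - (by' + \<beta>*X) = (uy*K - \<beta>*K*X - by' * (K - X - Y)) / K"
    using pos by (simp add: field_simps)
  then show ?thesis unfolding Gden_def using assms by simp
qed

definition m11 :: "real \<Rightarrow> real \<Rightarrow> real" where
  "m11 X Y = e*Y/X + bx/K*X - e/K*(Y^2/X)"

definition m12 :: "real \<Rightarrow> real \<Rightarrow> real" where
  "m12 X Y = (bx/K + \<beta> + e/K)*X + 2*e/K*Y - e"

definition m21 :: "real \<Rightarrow> real" where
  "m21 Y = (by'/K - \<beta>)*Y"

definition m22 :: "real \<Rightarrow> real" where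
  "m22 Y = by'/K*Y"

lemma is_jacobian_on_nullclines:
  assumes "0 < X" "0 < Y"
    and Y_null: "by' * (K - X - Y) = uy*K - \<beta>*K*X"
    and X_null: "(K - X - Y) * (bx*X + e*Y) = X * (ux*K + \<beta>*K*Y)"
  defines "D \<equiv> 1 + p * (bx + e*Y/X)" and "E \<equiv> 1 + h * (by' + \<beta>*X)"
  shows "fixed_point2 F G X Y"
    and "is_jacobian F G X Y (1 - p * m11 X Y / D) (- (p * m12 X Y / D))
      (- (h * m21 Y / E)) (1 - h * m22 Y / E)"
proof -
  have Fden: "Fden X Y = D" unfolding D_def using Fden_on_X_nullcline[OF assms(1) X_null] .
  have Gden: "Gden X Y = E" unfolding E_def using Gden_on_Y_nullcline[OF Y_null] .
  have "0 < D" "0 < E"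
    using Fden_pos[of X Y] Gden_pos[of X Y] assms(1,2) unfolding Fden Gden by simp_all
  then show fp: "fixed_point2 F G X Y"
    using assms(1) unfolding fixed_point2_def F_eq G_eq Fden Gden D_def E_def
    by (simp add: field_simps)
  have "1 + p*bx - p*bx/K*X + p*e/K*(Y^2/X) = D - p * m11 X Y"
    unfolding D_def m11_def by (simp add: algebra_simps)
  moreover have "p*e - p*(bx/K + \<beta> + e/K)*X - 2*p*e/K*Y = - (p * m12 X Y)"
    unfolding m12_def by (simp add: algebra_simps)
  moreover have "h*(\<beta> - by'/K)*Y = - (h * m21 Y)" unfolding m21_def by (simp add: algebra_simps)
  moreover have "1 + h*(by' + \<beta>*X) - h*by'/K*Y = E - h * m22 Y"
    unfolding E_def m22_def by (simp add: algebra_simps)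
  ultimately show "is_jacobian F G X Y (1 - p * m11 X Y / D) (- (p * m12 X Y / D))
      (- (h * m21 Y / E)) (1 - h * m22 Y / E)"
    using is_jacobian_at_fixed_point[OF fp] assms(1,2) \<open>0 < D\<close> \<open>0 < E\<close>
    by (simp add: Fden Gden diff_divide_distrib)
qed

lemma interior_jacobian_signs:
  assumes "0 < X" "0 < Y" "X + Y < K" "e * (K - X - Y) < \<beta>*K*X" "\<beta>*K < by'" "by' \<le> bx"
  shows "0 < m11 X Y" "m11 X Y < bx + e*Y/X" "0 < m12 X Y" "0 < m21 Y" "0 < m22 Y" "m22 Y < by' + \<beta>*X"
    and "m12 X Y * m21 Y < m11 X Y * m22 Y"
proof -
  define W where "W = K - X - Y"
  have W: "0 < W" "e*W < \<beta>*K*X" using assms(3,4) unfolding W_def by simp_all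
  have "m11 X Y = e*Y*(X + W)/(K*X) + bx/K*X"
    unfolding m11_def W_def using assms(1) pos by (simp add: field_simps power2_eq_square)
  then show "0 < m11 X Y" using assms(1,2) W pos by (simp add: add_pos_pos)
  have "bx + e*Y/X - m11 X Y = bx*(Y + W)/K + e/K*(Y^2/X)"
    unfolding m11_def W_def using assms(1) pos by (simp add: field_simps)
  moreover have "0 < bx*(Y + W)/K + e/K*(Y^2/X)" using assms(1,2) W pos by (simp add: add_pos_pos)
  ultimately show "m11 X Y < bx + e*Y/X" by linarith
  have "K * m12 X Y = bx*X + e*Y + (\<beta>*K*X - e*W)"
    unfolding m12_def W_def using pos by (simp add: field_simps)
  moreover have "0 < bx*X + e*Y + (\<beta>*K*X - e*W)" using assms(1,2) W pos by (simp add: add_pos_pos)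
  ultimately have "0 < K * m12 X Y" by linarith
  then show "0 < m12 X Y" using pos by (simp add: zero_less_mult_iff)
  show "0 < m21 Y" unfolding m21_def using assms(2,5) pos by (simp add: less_divide_eq)
  show "0 < m22 Y" unfolding m22_def using assms(2) pos by simp
  have "by' * Y < by' * K" using assms(1-3) pos by simp
  also have "\<dots> < (by' + \<beta>*X) * K" using assms(1) pos by simp
  finally show "m22 Y < by' + \<beta>*X" unfolding m22_def using pos by (simp add: divide_less_eq)
  have "by'*m11 X Y - (by' - \<beta>*K)*m12 X Y
      = by'*e*Y*W/(K*X) + e*W*(by' - \<beta>*K)/K + \<beta>*X*(bx + \<beta>*K - by') + \<beta>*e*Y"
    unfolding m11_def m12_def W_def using assms(1) pos by (simp add: field_simps power2_eq_square)
  also have "0 < \<dots>"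
  proof -
    have "0 < \<beta>*K" using pos by simp
    then have "0 < bx + \<beta>*K - by'" using assms(6) by linarith
    then show ?thesis using assms(1,2,5) W pos by (intro add_pos_pos) simp_all
  qed
  finally have "0 < Y/K * (by'*m11 X Y - (by' - \<beta>*K)*m12 X Y)" using assms(2) pos by simp
  also have "\<dots> = m11 X Y * m22 Y - m12 X Y * m21 Y"
    unfolding m21_def m22_def using pos by (simp add: field_simps)
  finally show "m12 X Y * m21 Y < m11 X Y * m22 Y" by simp
qed

lemma las2_interior:
  assumes "ux < uy" "by' + e \<le> bx" "uy < by'" "\<beta>*K < by'"
    and "(by' - \<beta>*K) / (by' - uy) < K / Xs"
  shows "las2 F G Xs Ys"
proof -
  note eq = interior_equilibrium[OF assms(2,3,5)]
  have bounds: "Xs + Ys < K" "e * (K - Xs - Ys) < \<beta>*K*Xs"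
    using interior_nullcline_bounds[OF eq assms(1,2)] by auto
  have "by' \<le> bx" using assms(2) pos by simp
  note signs = interior_jacobian_signs[OF eq(1,2) bounds assms(4) this]
  define D where "D = 1 + p * (bx + e*Ys/Xs)"
  define E where "E = 1 + h * (by' + \<beta>*Xs)"
  have "0 < D" "0 < E" unfolding D_def E_def using p_pos pos eq(1,2) by (simp_all add: add_pos_pos)
  have s: "0 < p * m11 Xs Ys / D" "p * m11 Xs Ys / D < 1"
  proof -
    have "p * m11 Xs Ys < p * (bx + e*Ys/Xs)" using p_pos signs(2) by simp
    then have "p * m11 Xs Ys < D" unfolding D_def by linarith
    then show "0 < p * m11 Xs Ys / D" "p * m11 Xs Ys / D < 1"
      using p_pos signs(1) \<open>0 < D\<close> by simp_all
  qed
  have t: "0 < h * m22 Ys / E" "h * m22 Ys / E < 1"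
  proof -
    have "h * m22 Ys < h * (by' + \<beta>*Xs)" using pos signs(6) by simp
    then have "h * m22 Ys < E" unfolding E_def by linarith
    then show "0 < h * m22 Ys / E" "h * m22 Ys / E < 1"
      using pos signs(5) \<open>0 < E\<close> by simp_all
  qed
  define k where "k = p*h/(D*E)"
  have "0 < k" unfolding k_def using p_pos pos \<open>0 < D\<close> \<open>0 < E\<close> by simp
  moreover have bc: "(- (p * m12 Xs Ys / D)) * (- (h * m21 Ys / E)) = k * (m12 Xs Ys * m21 Ys)"
    and st: "(p * m11 Xs Ys / D) * (h * m22 Ys / E) = k * (m11 Xs Ys * m22 Ys)"
    unfolding k_def by simp_all
  ultimately have "0 \<le> (- (p * m12 Xs Ys / D)) * (- (h * m21 Ys / E))"
    and "(- (p * m12 Xs Ys / D)) * (- (h * m21 Ys / E)) < (p * m11 Xs Ys / D) * (h * m22 Ys / E)"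
    using signs(3,4,7) by (simp_all add: mult_strict_left_mono)
  then show ?thesis
    using is_jacobian_on_nullclines[OF eq, folded D_def E_def] s t eigen2_cmod_lt_1_near_identity
    unfolding las2_def by blast
qed

end

theorem theorem4:
  fixes bx by' ux uy K \<beta> e h :: real
  assumes pos: "bx > 0" "by' > 0" "ux > 0" "uy > 0" "K > 0" "\<beta> > 0" "e > 0"
    and uyux: "uy > ux" and bxby: "bx \<ge> by' + e"
    and hpos: "h > 0"
  defines "F \<equiv> Fmap bx by' ux uy K \<beta> e h"
    and "G \<equiv> Gmap bx by' ux uy K \<beta> e h"
    and "Xbar \<equiv> K * (1 - ux / bx)"
    and "Xs \<equiv> Xstar bx by' ux uy K \<beta> e"
    and "Ys \<equiv> Ystar bx by' ux uy K \<beta> e"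
    and "V0 \<equiv> by' / bx * (ux / uy)"
    and "H0 \<equiv> \<beta> / uy * K * (1 - ux / bx)"
  shows "((bx < ux \<and> by' < uy) \<longrightarrow> las2 F G 0 0)
       \<and> (bx > ux \<longrightarrow> ((V0 + H0 < 1 \<longrightarrow> las2 F G Xbar 0) \<and> (V0 + H0 > 1 \<longrightarrow> unstable2 F G Xbar 0)))
       \<and> ((bx > ux \<and> by' > uy \<and> by' > \<beta> * K \<and> K / Xs > (by' - \<beta> * K) / (by' - uy))
            \<longrightarrow> las2 F G Xs Ys)"
proof -
  interpret S: nsfd_host_parasite bx by' ux uy K \<beta> e h
    using pos hpos by unfold_locales
  show ?thesis
    unfolding F_def G_def Xbar_def Xs_def Ys_def V0_def H0_def
    using S.las2_origin S.boundary_equilibrium_stability S.las2_interior[OF uyux bxby] by blast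
qed

end
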